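(* Let $\boldsymbol{x},\overline{\boldsymbol{x}}\in\mathbb{T}^3$ and $\boldsymbol{v}=(1,0,0)$, and let $\varepsilon>0$. For $\underline{\omega}=(\omega_1,\omega_2,\dots)$ with $\omega_i\in\Omega_0$ define $\boldsymbol{x}_0=\boldsymbol{x}$, $\boldsymbol{v}_0=\boldsymbol{v}$, $\boldsymbol{x}_n=f_{\omega_n}(\boldsymbol{x}_{n-1})$, $\boldsymbol{v}_n=\dfrac{D_{\boldsymbol{x}_{n-1}}f_{\omega_n}\boldsymbol{v}_{n-1}}{|D_{\boldsymbol{x}_{n-1}}f_{\omega_n}\boldsymbol{v}_{n-1}|}$. Then there exist $N_3\in\mathbb{N}$ and $\underline{\omega}^{N_3}=(\omega_1,\dots,\omega_{N_3})\in\Omega_0^{N_3}$ such that $$f_{\underline{\omega}^{N_3}}(\boldsymbol{x})=\overline{\boldsymbol{x}}\qquad\text{and}\qquad \boldsymbol{v}_{N_3}=(1,0,0).$$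
   Context: $\mathbb{T}^3=\mathbb{R}^3/(2\pi\mathbb{Z})^3$ with points $\boldsymbol{x}=(x,y,z)$. Fix $U>0$ and let $\Omega_0=[-U,U]^3\times[0,2\pi)^3$, with elements $\omega=(\mathsf{A},\mathsf{B},\mathsf{C},\alpha,\beta,\gamma)$. Define maps of $\mathbb{T}^3$: $f_{(\mathsf{A},\alpha)}(x,y,z)=(x+\mathsf{A}\sin(z+\alpha),\ y+\mathsf{A}\cos(z+\alpha),\ z)$, $f_{(\mathsf{B},\beta)}(x,y,z)=(x,\ y+\mathsf{B}\sin(x+\beta),\ z+\mathsf{B}\cos(x+\beta))$, $f_{(\mathsf{C},\gamma)}(x,y,z)=(x+\mathsf{C}\cos(y+\gamma),\ y,\ z+\mathsf{C}\sin(y+\gamma))$, and $f_\omega=f_{(\mathsf{C},\gamma)}\circ f_{(\mathsf{B},\beta)}\circ f_{(\mathsf{A},\alpha)}$. For $\underline{\omega}^N=(\omega_1,\dots,\omega_N)$, $f_{\underline{\omega}^N}=f_{\omega_N}\circ\cdots\circ f_{\omega_1}$; $D_{\boldsymbol{x}}f_\omega$ is the Jacobian of $f_\omega$ at $\boldsymbol{x}$. *)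

theory Defs
  imports "HOL-Analysis.Analysis"
begin

text \<open>Points of the torus T^3 are represented by lifts in R^3 (type real^3);
  two lifts represent the same torus point iff they differ componentwise by
  an integer multiple of 2 pi.\<close>

definition torus_eq :: "real^3 \<Rightarrow> real^3 \<Rightarrow> bool" where
  "torus_eq p q \<longleftrightarrow> (\<forall>i. \<exists>k::int. p$i - q$i = 2 * pi * of_int k)"

type_synonym param = "real \<times> real \<times> real \<times> real \<times> real \<times> real"

definition Omega0 :: "real \<Rightarrow> param set" where
  "Omega0 U = {(A,B,C,\<alpha>,\<beta>,\<gamma>). A \<in> {-U..U} \<and> B \<in> {-U..U} \<and> C \<in> {-U..U}
      \<and> \<alpha> \<in> {0..<2*pi} \<and> \<beta> \<in> {0..<2*pi} \<and> \<gamma> \<in> {0..<2*pi}}"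

definition fA :: "real \<Rightarrow> real \<Rightarrow> real^3 \<Rightarrow> real^3" where
  "fA A \<alpha> p = vector [p$1 + A * sin (p$3 + \<alpha>), p$2 + A * cos (p$3 + \<alpha>), p$3]"

definition fB :: "real \<Rightarrow> real \<Rightarrow> real^3 \<Rightarrow> real^3" where
  "fB B \<beta> p = vector [p$1, p$2 + B * sin (p$1 + \<beta>), p$3 + B * cos (p$1 + \<beta>)]"

definition fC :: "real \<Rightarrow> real \<Rightarrow> real^3 \<Rightarrow> real^3" where
  "fC C \<gamma> p = vector [p$1 + C * cos (p$2 + \<gamma>), p$2, p$3 + C * sin (p$2 + \<gamma>)]"

definition f_om :: "param \<Rightarrow> real^3 \<Rightarrow> real^3" where
  "f_om \<omega> = (case \<omega> of (A,B,C,\<alpha>,\<beta>,\<gamma>) \<Rightarrow> fC C \<gamma> \<circ> fB B \<beta> \<circ> fA A \<alpha>)"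

definition Df :: "param \<Rightarrow> real^3 \<Rightarrow> real^3 \<Rightarrow> real^3" where
  "Df \<omega> x = frechet_derivative (f_om \<omega>) (at x)"

text \<open>One step of the projectivised derivative cocycle:
  (x_{n-1}, v_{n-1}) |-> (x_n, v_n).\<close>
definition tstep :: "param \<Rightarrow> (real^3) \<times> (real^3) \<Rightarrow> (real^3) \<times> (real^3)" where
  "tstep \<omega> xv = (let x = fst xv; v = snd xv in
      (f_om \<omega> x, (1 / norm (Df \<omega> x v)) *\<^sub>R Df \<omega> x v))"

text \<open>(x_N, v_N) after applying omega_1, ..., omega_N (list order, omega_1 first).\<close>
definition traj :: "param list \<Rightarrow> (real^3) \<times> (real^3) \<Rightarrow> (real^3) \<times> (real^3)" where
  "traj ws xv = fold tstep ws xv"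

end

theory Submission
  imports Defs
begin

text \<open>With only A (resp. only C) switched on, f is a shear whose derivative is the
  identity on vectors with vanishing z- (resp. y-) component, so the direction
  (1,0,0) is never moved. Choosing the phase so that the relevant sine or cosine
  is 1 at the current point, such a shear translates the point by A along the x-
  or y-axis, or by C along the z-axis; the coordinate the phase depends on is
  unchanged, so the step can be repeated, and any translation is a finite
  repetition of steps of size at most U.\<close>

definition angle_rep :: "real \<Rightarrow> real" where
  "angle_rep a = 2 * pi * frac (a / (2 * pi))"

lemma angle_rep_range: "angle_rep a \<in> {0..<2 * pi}"
  using frac_lt_1[of "a / (2 * pi)"] by (simp add: angle_rep_def)

lemma angle_rep_eq: "angle_rep a = a + 2 * pi * of_int (- \<lfloor>a / (2 * pi)\<rfloor>)"
  by (simp add: angle_rep_def frac_def algebra_simps)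

lemma sin_add_angle_rep: "sin (s + angle_rep a) = sin (s + a)"
  unfolding angle_rep_eq add.assoc[symmetric] by (simp only: sin_add sin_int_2pin cos_int_2pin) simp

lemma cos_add_angle_rep: "cos (s + angle_rep a) = cos (s + a)"
  unfolding angle_rep_eq add.assoc[symmetric] by (simp only: cos_add sin_int_2pin cos_int_2pin) simp

lemma fA_zero: "fA 0 \<alpha> = id"
  by (rule ext) (simp add: fA_def vec_eq_iff forall_3)

lemma fB_zero: "fB 0 \<beta> = id"
  by (rule ext) (simp add: fB_def vec_eq_iff forall_3)

lemma fC_zero: "fC 0 \<gamma> = id"
  by (rule ext) (simp add: fC_def vec_eq_iff forall_3)

lemma f_om_A_only: "f_om (A, 0, 0, \<alpha>, 0, 0) = fA A \<alpha>"
  by (simp add: f_om_def fB_zero fC_zero)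

lemma f_om_C_only: "f_om (0, 0, C, 0, 0, \<gamma>) = fC C \<gamma>"
  by (simp add: f_om_def fA_zero fB_zero)

lemma fA_has_derivative:
  "(fA A \<alpha> has_derivative
     (\<lambda>h. h + (A * cos (p$3 + \<alpha>) * h$3) *\<^sub>R axis 1 1 - (A * sin (p$3 + \<alpha>) * h$3) *\<^sub>R axis 2 1))
   (at p)"
proof -
  have "fA A \<alpha> = (\<lambda>q. q + (A * sin (q$3 + \<alpha>)) *\<^sub>R axis 1 1 + (A * cos (q$3 + \<alpha>)) *\<^sub>R axis 2 1)"
    by (rule ext) (simp add: fA_def vec_eq_iff forall_3 axis_def)
  then show ?thesis
    by (auto intro!: derivative_eq_intros bounded_linear_imp_has_derivative simp: algebra_simps)
qed

lemma fC_has_derivative: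
  "(fC C \<gamma> has_derivative
     (\<lambda>h. h - (C * sin (p$2 + \<gamma>) * h$2) *\<^sub>R axis 1 1 + (C * cos (p$2 + \<gamma>) * h$2) *\<^sub>R axis 3 1))
   (at p)"
proof -
  have "fC C \<gamma> = (\<lambda>q. q + (C * cos (q$2 + \<gamma>)) *\<^sub>R axis 1 1 + (C * sin (q$2 + \<gamma>)) *\<^sub>R axis 3 1)"
    by (rule ext) (simp add: fC_def vec_eq_iff forall_3 axis_def)
  then show ?thesis
    by (auto intro!: derivative_eq_intros bounded_linear_imp_has_derivative simp: algebra_simps)
qed

lemma tstep_A_only:
  assumes "v$3 = 0" "norm v = 1"
  shows "tstep (A, 0, 0, \<alpha>, 0, 0) (p, v) = (fA A \<alpha> p, v)"
proof -
  have "Df (A, 0, 0, \<alpha>, 0, 0) p v = v"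
    unfolding Df_def f_om_A_only frechet_derivative_at[OF fA_has_derivative, symmetric] using assms by simp
  then show ?thesis using assms by (simp add: tstep_def f_om_A_only)
qed

lemma tstep_C_only:
  assumes "v$2 = 0" "norm v = 1"
  shows "tstep (0, 0, C, 0, 0, \<gamma>) (p, v) = (fC C \<gamma> p, v)"
proof -
  have "Df (0, 0, C, 0, 0, \<gamma>) p v = v"
    unfolding Df_def f_om_C_only frechet_derivative_at[OF fC_has_derivative, symmetric] using assms by simp
  then show ?thesis using assms by (simp add: tstep_def f_om_C_only)
qed

lemma fA_translate_x: "q$3 = z \<Longrightarrow> fA t (angle_rep (pi/2 - z)) q = q + t *\<^sub>R axis 1 1"
  by (simp add: fA_def sin_add_angle_rep cos_add_angle_rep vec_eq_iff forall_3 axis_def)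

lemma fA_translate_y: "q$3 = z \<Longrightarrow> fA t (angle_rep (- z)) q = q + t *\<^sub>R axis 2 1"
  by (simp add: fA_def sin_add_angle_rep cos_add_angle_rep vec_eq_iff forall_3 axis_def)

lemma fC_translate_z: "q$2 = y \<Longrightarrow> fC t (angle_rep (pi/2 - y)) q = q + t *\<^sub>R axis 3 1"
  by (simp add: fC_def sin_add_angle_rep cos_add_angle_rep vec_eq_iff forall_3 axis_def)

lemma A_only_in_Omega0: "\<bar>A\<bar> \<le> U \<Longrightarrow> (A, 0, 0, angle_rep \<alpha>, 0, 0) \<in> Omega0 U"
  using angle_rep_range[of \<alpha>] by (auto simp: Omega0_def)

lemma C_only_in_Omega0: "\<bar>C\<bar> \<le> U \<Longrightarrow> (0, 0, C, 0, 0, angle_rep \<gamma>) \<in> Omega0 U"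
  using angle_rep_range[of \<gamma>] by (auto simp: Omega0_def)

lemma tstep_translation:
  fixes k :: 3
  assumes "\<bar>t\<bar> \<le> U"
  obtains w j where "w \<in> Omega0 U" "j \<noteq> k"
    "\<And>q. q$j = p$j \<Longrightarrow> tstep w (q, axis 1 1) = (q + t *\<^sub>R axis k 1, axis 1 1)"
proof -
  have e1: "(axis 1 1 :: real^3)$2 = 0" "(axis 1 1 :: real^3)$3 = 0"
    by (simp_all add: axis_def)
  note tstep_A = tstep_A_only[OF e1(2) norm_axis_1]
  note tstep_C = tstep_C_only[OF e1(1) norm_axis_1]
  consider "k = 1" | "k = 2" | "k = 3" using exhaust_3 by blast
  then show thesis
  proof cases
    case 1
    show thesis
      by (rule that[of "(t, 0, 0, angle_rep (pi/2 - p$3), 0, 0)" 3])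
        (simp_all add: 1 assms A_only_in_Omega0 tstep_A fA_translate_x)
  next
    case 2
    show thesis
      by (rule that[of "(t, 0, 0, angle_rep (- p$3), 0, 0)" 3])
        (simp_all add: 2 assms A_only_in_Omega0 tstep_A fA_translate_y)
  next
    case 3
    show thesis
      by (rule that[of "(0, 0, t, 0, 0, angle_rep (pi/2 - p$2))" 2])
        (simp_all add: 3 assms C_only_in_Omega0 tstep_C fC_translate_z)
  qed
qed

lemma traj_append: "traj (ws @ ws') xv = traj ws' (traj ws xv)"
  by (simp add: traj_def)

lemma traj_replicate_translation:
  assumes step: "\<And>q. q$j = c \<Longrightarrow> tstep w (q, v) = (q + u, v)"
    and "u$j = 0" and "p$j = c"
  shows "traj (replicate n w) (p, v) = (p + real n *\<^sub>R u, v)"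
  using \<open>p$j = c\<close>
proof (induction n arbitrary: p)
  case 0
  then show ?case by (simp add: traj_def)
next
  case (Suc n)
  have "traj (replicate (Suc n) w) (p, v) = traj (replicate n w) (p + u, v)"
    using step[OF Suc.prems] by (simp add: traj_def)
  also have "\<dots> = (p + u + real n *\<^sub>R u, v)"
    using Suc.IH Suc.prems \<open>u$j = 0\<close> by simp
  finally show ?case by (simp add: algebra_simps)
qed

lemma translation_word:
  fixes k :: 3
  assumes "U > 0"
  obtains ws where "set ws \<subseteq> Omega0 U"
    "traj ws (p, axis 1 1) = (p + d *\<^sub>R axis k 1, axis 1 1)"
proof -
  obtain n :: nat where n: "\<bar>d\<bar> < real n * U"
    using ex_less_of_nat_mult[OF assms] by blast
  then have "n > 0" using assms by (cases "n = 0") auto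
  define t where "t = d / real n"
  have "\<bar>t\<bar> = \<bar>d\<bar> / real n"
    by (simp add: t_def)
  also have "\<dots> \<le> U"
    using n \<open>n > 0\<close> by (simp add: pos_divide_le_eq mult.commute)
  finally have "\<bar>t\<bar> \<le> U" .
  then obtain w j where "w \<in> Omega0 U" "j \<noteq> k"
    and step: "\<And>q. q$j = p$j \<Longrightarrow> tstep w (q, axis 1 1) = (q + t *\<^sub>R axis k 1, axis 1 1)"
    by (rule tstep_translation[where k = k and p = p]) blast
  have "traj (replicate n w) (p, axis 1 1) = (p + real n *\<^sub>R t *\<^sub>R axis k 1, axis 1 1)"
    by (rule traj_replicate_translation[OF step]) (use \<open>j \<noteq> k\<close> in \<open>auto simp: axis_def\<close>)
  also have "real n *\<^sub>R t *\<^sub>R axis k 1 = d *\<^sub>R axis k 1"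
    using \<open>n > 0\<close> by (simp add: t_def)
  finally show thesis
    using \<open>w \<in> Omega0 U\<close> by (intro that[of "replicate n w"]) auto
qed

theorem lemma3p4:
  fixes U :: real and x xbar :: "real^3"
  assumes "U > 0"
  shows "\<exists>ws :: param list. set ws \<subseteq> Omega0 U
           \<and> torus_eq (fst (traj ws (x, vector [1,0,0]))) xbar
           \<and> snd (traj ws (x, vector [1,0,0])) = vector [1,0,0]"
proof -
  define x1 where "x1 = x + (xbar$1 - x$1) *\<^sub>R axis 1 1"
  define x2 where "x2 = x1 + (xbar$2 - x$2) *\<^sub>R axis 2 1"
  obtain ws1 where ws1: "set ws1 \<subseteq> Omega0 U" "traj ws1 (x, axis 1 1) = (x1, axis 1 1)"
    unfolding x1_def using translation_word[OF assms] .
  obtain ws2 where ws2: "set ws2 \<subseteq> Omega0 U" "traj ws2 (x1, axis 1 1) = (x2, axis 1 1)"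
    unfolding x2_def using translation_word[OF assms] .
  obtain ws3 where ws3: "set ws3 \<subseteq> Omega0 U"
    "traj ws3 (x2, axis 1 1) = (x2 + (xbar$3 - x$3) *\<^sub>R axis 3 1, axis 1 1)"
    using translation_word[OF assms] .
  have "x2 + (xbar$3 - x$3) *\<^sub>R axis 3 1 = xbar"
    by (simp add: x1_def x2_def vec_eq_iff forall_3 axis_def)
  then have "traj (ws1 @ ws2 @ ws3) (x, axis 1 1) = (xbar, axis 1 1)"
    using ws1 ws2 ws3 by (simp add: traj_append)
  moreover have "vector [1, 0, 0] = (axis 1 1 :: real^3)"
    by (simp add: vec_eq_iff forall_3 axis_def)
  moreover have "torus_eq xbar xbar"
    by (simp add: torus_eq_def)
  ultimately show ?thesis
    using ws1 ws2 ws3 by (intro exI[of _ "ws1 @ ws2 @ ws3"]) simp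
qed

end
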